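(* Let $p$ be a real polynomial in variables $x_1,\ldots,x_k$, and let $M$ be $100\deg(p)$ times the sum of the absolute values of the coefficients of $p$. Define $q \in \mathbb{R}[x_1,\ldots,x_k,y_1,\ldots,y_k]$ by $$q := p \prod_{i=1}^k (1-x_i)^6 + M \left(\sum_{i=1}^k \big(y_i - g(x_i)\big)\right).$$ Then the following are equivalent: (a) $q(x_1,\ldots,x_k,y_1,\ldots,y_k) < 0$ for some real $x_1,\ldots,x_k,y_1,\ldots,y_k$ with $(x_i,y_i) \in R$ for every $1 \leq i \leq k$; (b) $p(x_1,\ldots,x_k)<0$ for some $x_1,\ldots,x_k \in \{1-1/n : n \in \mathbb{N}\}$.
   Context: $g(x):=2x^2-x$. $L:[0,1)\to\mathbb{R}$ is the continuous piecewise linear function which, for every positive integer $t$, on the interval $[1-\frac1t,1-\frac1{t+1}]$ is given by $L(x)=\frac{3t^2-t-2}{t(t+1)}x-\frac{2(t-1)}{t+1}$ (the linear function agreeing with $g$ at the endpoints of that interval). $R:=\{(x,y)\in[0,1]^2: y\ge L(x)\}$ (where $x$ ranges over the domain $[0,1)$ of $L$). $\mathbb{N}=\{1,2,3,\ldots\}$. *)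

theory Defs
  imports Complex_Main
begin

text \<open>A real polynomial in variables x_0..x_{k-1} is represented by its coefficient
  function on exponent vectors (monomials) m :: nat => nat, with finite support and
  only the first k variables occurring.\<close>

definition coeff_supp :: "((nat \<Rightarrow> nat) \<Rightarrow> real) \<Rightarrow> (nat \<Rightarrow> nat) set" where
  "coeff_supp c = {m. c m \<noteq> 0}"

definition is_mpoly :: "nat \<Rightarrow> ((nat \<Rightarrow> nat) \<Rightarrow> real) \<Rightarrow> bool" where
  "is_mpoly k c \<longleftrightarrow> finite (coeff_supp c) \<and> (\<forall>m\<in>coeff_supp c. \<forall>i\<ge>k. m i = 0)"

definition mpoly_eval :: "nat \<Rightarrow> ((nat \<Rightarrow> nat) \<Rightarrow> real) \<Rightarrow> (nat \<Rightarrow> real) \<Rightarrow> real" where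
  "mpoly_eval k c x = (\<Sum>m\<in>coeff_supp c. c m * (\<Prod>i<k. x i ^ m i))"

definition mpoly_deg :: "nat \<Rightarrow> ((nat \<Rightarrow> nat) \<Rightarrow> real) \<Rightarrow> nat" where
  "mpoly_deg k c = Max (insert 0 ((\<lambda>m. \<Sum>i<k. m i) ` coeff_supp c))"

definition coeff_abs_sum :: "((nat \<Rightarrow> nat) \<Rightarrow> real) \<Rightarrow> real" where
  "coeff_abs_sum c = (\<Sum>m\<in>coeff_supp c. \<bar>c m\<bar>)"

definition g :: "real \<Rightarrow> real" where
  "g x = 2 * x^2 - x"

text \<open>L on [0,1): on [1-1/t, 1-1/(t+1)] (t positive integer) it is the given linear
  function; t = floor (1/(1-x)) selects such an interval containing x.\<close>
definition L :: "real \<Rightarrow> real" where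
  "L x = (let t = real (nat \<lfloor>1 / (1 - x)\<rfloor>) in
            (3 * t^2 - t - 2) / (t * (t + 1)) * x - 2 * (t - 1) / (t + 1))"

definition R :: "(real \<times> real) set" where
  "R = {(x, y). 0 \<le> x \<and> x < 1 \<and> 0 \<le> y \<and> y \<le> 1 \<and> y \<ge> L x}"

end

theory Submission
  imports Defs
begin

text \<open>On each linear piece \<open>[a, b]\<close> of \<open>L\<close> we have \<open>L x - g x = 2 (x - a) (b - x)\<close>, while
  \<open>b - a = 1/(t(t+1))\<close> and \<open>(1 - x)\<^sup>6 \<le> 1/t\<^sup>2\<close>. Hence for \<open>(x, y) \<in> R\<close> the distance from \<open>x\<close> to
  the nearest grid point \<open>1 - 1/n\<close>, weighted by \<open>(1 - x)\<^sup>6\<close>, is at most \<open>100 (y - g x)\<close>.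
  Since \<open>p\<close> is Lipschitz on \<open>[0,1]\<^sup>k\<close> with constant \<open>deg p\<close> times its coefficient sum, moving
  \<open>x\<close> to the nearest grid point changes \<open>p(x) \<Prod>(1 - x\<^sub>i)\<^sup>6\<close> by at most the penalty term, so
  \<open>q < 0\<close> forces \<open>p < 0\<close> at a grid point. Conversely, grid points lie on the graph of \<open>g\<close>
  inside \<open>R\<close>, where the penalty vanishes and \<open>q\<close> has the sign of \<open>p\<close>.\<close>

definition grid_point :: "real \<Rightarrow> bool" where
  "grid_point x \<longleftrightarrow> (\<exists>n::nat. n \<ge> 1 \<and> x = 1 - 1 / real n)"

lemma abs_power_diff_le:
  fixes a b :: real
  assumes "0 \<le> a" "a \<le> 1" "0 \<le> b" "b \<le> 1"
  shows "\<bar>a ^ n - b ^ n\<bar> \<le> real n * \<bar>a - b\<bar>"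
proof (induction n)
  case 0
  then show ?case by simp
next
  case (Suc n)
  have split: "a ^ Suc n - b ^ Suc n = a * (a ^ n - b ^ n) + (a - b) * b ^ n"
    by (simp add: algebra_simps)
  have "\<bar>a * (a ^ n - b ^ n)\<bar> \<le> \<bar>a ^ n - b ^ n\<bar>"
    using assms by (simp add: abs_mult mult_left_le_one_le)
  moreover have "\<bar>(a - b) * b ^ n\<bar> \<le> \<bar>a - b\<bar>"
    using assms by (simp add: abs_mult mult_left_le power_le_one)
  ultimately show ?case
    using Suc split by (simp add: algebra_simps)
qed

lemma abs_prod_diff_le_sum:
  fixes f h :: "'a \<Rightarrow> real"
  assumes "finite A" "\<forall>i\<in>A. 0 \<le> f i \<and> f i \<le> 1 \<and> 0 \<le> h i \<and> h i \<le> 1"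
  shows "\<bar>prod f A - prod h A\<bar> \<le> (\<Sum>i\<in>A. \<bar>f i - h i\<bar>)"
  using assms
proof (induction A rule: finite_induct)
  case empty
  then show ?case by simp
next
  case (insert a A)
  have split: "prod f (insert a A) - prod h (insert a A)
      = f a * (prod f A - prod h A) + (f a - h a) * prod h A"
    using insert by (simp add: algebra_simps)
  have "0 \<le> prod h A" "prod h A \<le> 1"
    using insert by (auto intro: prod_nonneg prod_le_1)
  then have "\<bar>(f a - h a) * prod h A\<bar> \<le> \<bar>f a - h a\<bar>"
    by (simp add: abs_mult mult_left_le)
  moreover have "\<bar>f a * (prod f A - prod h A)\<bar> \<le> \<bar>prod f A - prod h A\<bar>"
    using insert by (simp add: abs_mult mult_left_le_one_le)
  ultimately show ?case
    using insert split by simp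
qed

lemma prod_le_factor:
  fixes f :: "'a \<Rightarrow> real"
  assumes "finite A" "i \<in> A" "\<forall>j\<in>A. 0 \<le> f j \<and> f j \<le> 1"
  shows "prod f A \<le> f i"
proof -
  have "prod f A = f i * prod f (A - {i})"
    using assms by (simp add: prod.remove)
  moreover have "prod f (A - {i}) \<le> 1"
    using assms by (intro prod_le_1) auto
  ultimately show ?thesis
    using assms by (simp add: mult_left_le)
qed

lemma mpoly_eval_lipschitz:
  assumes "is_mpoly k c"
    and "\<forall>i<k. 0 \<le> x i \<and> x i \<le> 1 \<and> 0 \<le> z i \<and> z i \<le> 1"
  shows "\<bar>mpoly_eval k c x - mpoly_eval k c z\<bar>
         \<le> coeff_abs_sum c * real (mpoly_deg k c) * (\<Sum>i<k. \<bar>x i - z i\<bar>)"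
proof -
  have fin: "finite (coeff_supp c)"
    using assms(1) unfolding is_mpoly_def by blast
  let ?d = "real (mpoly_deg k c)" and ?D = "\<Sum>i<k. \<bar>x i - z i\<bar>"
  have monomial: "\<bar>(\<Prod>i<k. x i ^ m i) - (\<Prod>i<k. z i ^ m i)\<bar> \<le> ?d * ?D"
    if m: "m \<in> coeff_supp c" for m
  proof -
    have "(\<Sum>i<k. m i) \<le> mpoly_deg k c"
      unfolding mpoly_deg_def using fin m by (intro Max_ge) auto
    then have exponent: "real (m i) \<le> ?d" if "i < k" for i
      using member_le_sum[of i "{..<k}" m] that by simp
    have "\<bar>(\<Prod>i<k. x i ^ m i) - (\<Prod>i<k. z i ^ m i)\<bar> \<le> (\<Sum>i<k. \<bar>x i ^ m i - z i ^ m i\<bar>)"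
      using assms(2) by (intro abs_prod_diff_le_sum) (auto simp: power_le_one)
    also have "\<dots> \<le> (\<Sum>i<k. ?d * \<bar>x i - z i\<bar>)"
    proof (rule sum_mono)
      fix i assume "i \<in> {..<k}"
      then have "\<bar>x i ^ m i - z i ^ m i\<bar> \<le> real (m i) * \<bar>x i - z i\<bar>"
        and "real (m i) * \<bar>x i - z i\<bar> \<le> ?d * \<bar>x i - z i\<bar>"
        using assms(2) exponent by (auto intro: abs_power_diff_le mult_right_mono)
      then show "\<bar>x i ^ m i - z i ^ m i\<bar> \<le> ?d * \<bar>x i - z i\<bar>"
        by linarith
    qed
    also have "\<dots> = ?d * ?D"
      by (simp add: sum_distrib_left)
    finally show ?thesis .
  qed
  have "\<bar>mpoly_eval k c x - mpoly_eval k c z\<bar>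
      = \<bar>\<Sum>m\<in>coeff_supp c. c m * ((\<Prod>i<k. x i ^ m i) - (\<Prod>i<k. z i ^ m i))\<bar>"
    unfolding mpoly_eval_def by (simp add: sum_subtractf algebra_simps)
  also have "\<dots> \<le> (\<Sum>m\<in>coeff_supp c. \<bar>c m\<bar> * (?d * ?D))"
    using monomial by (intro order_trans[OF sum_abs] sum_mono) (simp add: abs_mult mult_left_mono)
  also have "\<dots> = coeff_abs_sum c * ?d * ?D"
    unfolding coeff_abs_sum_def by (simp add: sum_distrib_right mult.assoc)
  finally show ?thesis .
qed

lemma L_minus_g:
  assumes "t = real (nat \<lfloor>1 / (1 - x)\<rfloor>)" "t > 0"
  shows "L x - g x = 2 * (x - (1 - 1 / t)) * ((1 - 1 / (t + 1)) - x)"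
  unfolding L_def Let_def g_def assms(1)[symmetric] using assms(2)
  by (simp add: divide_simps power2_eq_square) (simp add: algebra_simps)

lemma L_piece:
  assumes "0 \<le> x" "x < 1"
  defines "t \<equiv> nat \<lfloor>1 / (1 - x)\<rfloor>"
  shows "t \<ge> 1" "1 - 1 / real t \<le> x" "x < 1 - 1 / (real t + 1)"
proof -
  define r where "r = 1 / (1 - x)"
  have "r \<ge> 1"
    unfolding r_def using assms by (simp add: field_simps)
  then have "real t = of_int \<lfloor>r\<rfloor>"
    unfolding t_def r_def[symmetric] by simp
  then have "real t \<le> r" "r < real t + 1"
    by linarith+
  show "t \<ge> 1"
    using \<open>r < real t + 1\<close> \<open>r \<ge> 1\<close> by linarith
  show "1 - 1 / real t \<le> x" "x < 1 - 1 / (real t + 1)"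
    using \<open>real t \<le> r\<close> \<open>r < real t + 1\<close> \<open>t \<ge> 1\<close> assms(1,2)
    unfolding r_def by (auto simp: field_simps)
qed

lemma min_dist_times_length_le:
  fixes a b x :: real
  assumes "a \<le> x" "x \<le> b"
  shows "min (x - a) (b - x) * (b - a) \<le> 2 * (x - a) * (b - x)"
proof (cases "x - a \<le> b - x")
  case True
  then have "(x - a) * (b - a) \<le> (x - a) * (2 * (b - x))"
    using assms by (intro mult_left_mono) auto
  then show ?thesis
    using True by (simp add: algebra_simps)
next
  case False
  then have "(b - x) * (b - a) \<le> (b - x) * (2 * (x - a))"
    using assms by (intro mult_left_mono) auto
  then show ?thesis
    using False by (simp add: mult_ac)
qed

lemma R_near_grid_point:
  assumes "(x, y) \<in> R"
  obtains x' where "grid_point x'" "0 \<le> x'" "x' \<le> 1"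
    "(1 - x) ^ 6 * \<bar>x - x'\<bar> \<le> 100 * (y - g x)"
proof -
  have x: "0 \<le> x" "x < 1" and yL: "L x \<le> y"
    using assms unfolding R_def by auto
  define t where "t = nat \<lfloor>1 / (1 - x)\<rfloor>"
  define a where "a = 1 - 1 / real t"
  define b where "b = 1 - 1 / (real t + 1)"
  have t: "t \<ge> 1" and ax: "a \<le> x" and xb: "x < b"
    using L_piece[OF x] unfolding t_def a_def b_def by auto
  have gap: "L x - g x = 2 * (x - a) * (b - x)"
    unfolding a_def b_def by (rule L_minus_g) (simp add: t_def, use t in simp)
  define x' where "x' = (if x - a \<le> b - x then a else b)"
  have dist: "\<bar>x - x'\<bar> = min (x - a) (b - x)"
    unfolding x'_def using ax xb by auto
  have length: "b - a = 1 / (real t * (real t + 1))"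
    unfolding a_def b_def using t by (simp add: field_simps)
  have "(1 - x) ^ 6 \<le> (1 - x) ^ 2"
    using x by (intro power_decreasing) auto
  also have "\<dots> \<le> (1 / real t) ^ 2"
    using ax x unfolding a_def by (intro power_mono) auto
  also have "\<dots> \<le> 100 * (b - a)"
    unfolding length using t by (simp add: divide_simps power2_eq_square)
  finally have "(1 - x) ^ 6 * \<bar>x - x'\<bar> \<le> 100 * (b - a) * \<bar>x - x'\<bar>"
    by (rule mult_right_mono) simp
  also have "\<dots> = 100 * (min (x - a) (b - x) * (b - a))"
    unfolding dist by (simp add: mult_ac)
  also have "\<dots> \<le> 100 * (2 * (x - a) * (b - x))"
    using min_dist_times_length_le[of a x b] ax xb by simp
  also have "\<dots> \<le> 100 * (y - g x)"
    using gap yL by simp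
  finally have weighted: "(1 - x) ^ 6 * \<bar>x - x'\<bar> \<le> 100 * (y - g x)" .
  have "grid_point x'"
    unfolding grid_point_def x'_def a_def b_def using t
    by (auto intro!: exI[of _ t] exI[of _ "t + 1"])
  moreover have "0 \<le> x'" "x' \<le> 1"
    unfolding x'_def a_def b_def using t by (auto simp: field_simps)
  ultimately show ?thesis
    using weighted that by blast
qed

lemma grid_point_in_R:
  assumes "grid_point x"
  shows "(x, g x) \<in> R"
proof -
  obtain n :: nat where n: "n \<ge> 1" "x = 1 - 1 / real n"
    using assms unfolding grid_point_def by blast
  have "nat \<lfloor>1 / (1 - x)\<rfloor> = n"
    using n by simp
  then have "L x = g x"
    using L_minus_g[of "real n" x] n by simp
  moreover have "0 \<le> x" "x < 1" "g x \<le> 1"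
    using n(1) unfolding n(2) g_def by (auto simp: field_simps power2_eq_square)
  moreover have "0 \<le> g x"
  proof (cases "n = 1")
    case False
    then have "real n \<ge> 2"
      using n by simp
    then have "0 \<le> real n * (real n - 1) * (real n - 2)"
      by simp
    then show ?thesis
      using \<open>real n \<ge> 2\<close> unfolding n(2) g_def by (simp add: field_simps power2_eq_square)
  qed (use n in \<open>simp add: g_def\<close>)
  ultimately show ?thesis
    unfolding R_def by simp
qed

lemma penalized_nonneg_on_R:
  assumes "is_mpoly k c"
    and grid_nonneg: "\<forall>z. (\<forall>i<k. grid_point (z i)) \<longrightarrow> mpoly_eval k c z \<ge> 0"
    and xyR: "\<forall>i<k. (x i, y i) \<in> R"
  shows "0 \<le> mpoly_eval k c x * (\<Prod>i<k. (1 - x i) ^ 6)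
            + (100 * real (mpoly_deg k c) * coeff_abs_sum c) * (\<Sum>i<k. y i - g (x i))"
proof -
  have "\<exists>x'. grid_point x' \<and> 0 \<le> x' \<and> x' \<le> 1
      \<and> (1 - x i) ^ 6 * \<bar>x i - x'\<bar> \<le> 100 * (y i - g (x i))" if "i < k" for i
    using R_near_grid_point[of "x i" "y i"] xyR that by blast
  then obtain z where z: "\<forall>i<k. grid_point (z i) \<and> 0 \<le> z i \<and> z i \<le> 1
      \<and> (1 - x i) ^ 6 * \<bar>x i - z i\<bar> \<le> 100 * (y i - g (x i))"
    by metis
  have x: "\<forall>i<k. 0 \<le> x i \<and> x i < 1"
    using xyR unfolding R_def by auto
  define C where "C = coeff_abs_sum c * real (mpoly_deg k c)"
  define P where "P = (\<Prod>i<k. (1 - x i) ^ 6)"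
  have "C \<ge> 0"
    unfolding C_def coeff_abs_sum_def by (simp add: sum_nonneg)
  have "P \<ge> 0"
    unfolding P_def using x by (intro prod_nonneg) auto
  have "- (C * (\<Sum>i<k. \<bar>x i - z i\<bar>)) \<le> mpoly_eval k c x"
    using mpoly_eval_lipschitz[OF assms(1), of x z] grid_nonneg x z unfolding C_def by force
  then have "- (C * (\<Sum>i<k. \<bar>x i - z i\<bar> * P)) \<le> mpoly_eval k c x * P"
    using \<open>P \<ge> 0\<close> mult_right_mono by (fastforce simp: sum_distrib_right mult.assoc)
  moreover have "(\<Sum>i<k. \<bar>x i - z i\<bar> * P) \<le> (\<Sum>i<k. 100 * (y i - g (x i)))"
  proof (rule sum_mono)
    fix i assume i: "i \<in> {..<k}"
    have "P \<le> (1 - x i) ^ 6"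
      unfolding P_def using i x by (intro prod_le_factor) (auto simp: power_le_one)
    then have "\<bar>x i - z i\<bar> * P \<le> (1 - x i) ^ 6 * \<bar>x i - z i\<bar>"
      using mult_left_mono[of P "(1 - x i) ^ 6" "\<bar>x i - z i\<bar>"] by (simp add: mult.commute)
    then show "\<bar>x i - z i\<bar> * P \<le> 100 * (y i - g (x i))"
      using z i by fastforce
  qed
  then have "C * (\<Sum>i<k. \<bar>x i - z i\<bar> * P) \<le> C * (\<Sum>i<k. 100 * (y i - g (x i)))"
    using \<open>C \<ge> 0\<close> by (rule mult_left_mono)
  moreover have "C * (\<Sum>i<k. 100 * (y i - g (x i)))
      = (100 * real (mpoly_deg k c) * coeff_abs_sum c) * (\<Sum>i<k. y i - g (x i))"
    unfolding C_def sum_distrib_left[symmetric] by (simp add: mult_ac)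
  ultimately show ?thesis
    unfolding P_def by linarith
qed

theorem lemma5p3:
  fixes k :: nat and c :: "(nat \<Rightarrow> nat) \<Rightarrow> real"
  assumes "is_mpoly k c"
  shows "(\<exists>x y :: nat \<Rightarrow> real. (\<forall>i<k. (x i, y i) \<in> R) \<and>
            mpoly_eval k c x * (\<Prod>i<k. (1 - x i) ^ 6)
            + (100 * real (mpoly_deg k c) * coeff_abs_sum c) * (\<Sum>i<k. y i - g (x i)) < 0)
         \<longleftrightarrow>
         (\<exists>x :: nat \<Rightarrow> real. (\<forall>i<k. \<exists>n::nat. n \<ge> 1 \<and> x i = 1 - 1 / real n) \<and>
            mpoly_eval k c x < 0)"
  (is "?q_neg \<longleftrightarrow> ?p_neg")
proof
  assume ?q_neg
  then obtain x y where xyR: "\<forall>i<k. (x i, y i) \<in> R" and q_neg: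
      "mpoly_eval k c x * (\<Prod>i<k. (1 - x i) ^ 6)
        + (100 * real (mpoly_deg k c) * coeff_abs_sum c) * (\<Sum>i<k. y i - g (x i)) < 0"
    by blast
  show ?p_neg
  proof (rule ccontr)
    assume "\<not> ?p_neg"
    then have grid_nonneg: "\<forall>z. (\<forall>i<k. grid_point (z i)) \<longrightarrow> mpoly_eval k c z \<ge> 0"
      unfolding grid_point_def by (meson not_less)
    show False
      using penalized_nonneg_on_R[OF assms grid_nonneg xyR] q_neg by linarith
  qed
next
  assume ?p_neg
  then obtain x where grid: "\<forall>i<k. grid_point (x i)" and "mpoly_eval k c x < 0"
    unfolding grid_point_def by blast
  moreover have "(\<Prod>i<k. (1 - x i) ^ 6) > 0"
  proof (intro prod_pos ballI)
    fix i assume "i \<in> {..<k}"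
    then show "(1 - x i) ^ 6 > 0"
      using grid unfolding grid_point_def by auto
  qed
  ultimately have "mpoly_eval k c x * (\<Prod>i<k. (1 - x i) ^ 6)
      + (100 * real (mpoly_deg k c) * coeff_abs_sum c) * (\<Sum>i<k. g (x i) - g (x i)) < 0"
    by (simp add: mult_neg_pos)
  then show ?q_neg
    using grid grid_point_in_R by (intro exI[of _ x] exI[of _ "\<lambda>i. g (x i)"]) auto
qed

end
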